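(* In the $n$-body problem in ${\bf H}^2$ ($n\ge2$, masses $m_i>0$), there is no solution defined for all $t\in\mathbb R$ of the form ${\bf q}_i(t)=(0,\sinh(\omega t+\alpha_i),\cosh(\omega t+\alpha_i))$, $i=1,\dots,n$, with constants $\omega\ne0$ and $\alpha_i$ (the $\alpha_i$ pairwise distinct, so that the configuration is collisionless); that is, there are no hyperbolic relative equilibria along the fixed geodesic $x=0$. Since Lorentz transformations preserving ${\bf H}^2$ map any geodesic to $x=0$ and preserve the equations, the same holds along any fixed geodesic.
   Context: The $n$-body problem in ${\bf H}^2$ (Weierstrass model): with the Lorentz inner product ${\bf a}\boxdot{\bf b}=a_xb_x+a_yb_y-a_zb_z$ on $\mathbb R^3$, ${\bf H}^2=\{(x,y,z): x^2+y^2-z^2=-1,\ z>0\}$. Bodies of masses $m_1,\dots,m_n>0$ have positions ${\bf q}_i=(x_i,y_i,z_i)\in{\bf H}^2$ and satisfy $$\ddot{\bf q}_i=\sum_{j\ne i}\frac{m_j[{\bf q}_j+({\bf q}_i\boxdot{\bf q}_j){\bf q}_i]}{[({\bf q}_i\boxdot{\bf q}_j)^2-1]^{3/2}}+(\dot{\bf q}_i\boxdot\dot{\bf q}_i){\bf q}_i,\qquad {\bf q}_i\boxdot{\bf q}_i=-1,\ \ {\bf q}_i\boxdot\dot{\bf q}_i=0,$$ $i=1,\dots,n$, defined only for collisionless configurations. Geodesics of ${\bf H}^2$ are its intersections with planes through the origin. A hyperbolic relative equilibrium is a solution defined for all $t\in\mathbb R$ with $x_i$ constant, $y_i=\rho_i\sinh(\omega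 t+\alpha_i)$, $z_i=\rho_i\cosh(\omega t+\alpha_i)$, constants $\omega,\alpha_i$, $\rho_i=(1+x_i^2)^{1/2}$. *)

theory Defs
  imports "HOL-Analysis.Analysis"
begin

type_synonym point3 = "real \<times> real \<times> real"

definition lorentz :: "point3 \<Rightarrow> point3 \<Rightarrow> real" where
  "lorentz a b = fst a * fst b + fst (snd a) * fst (snd b) - snd (snd a) * snd (snd b)"

definition in_H2 :: "point3 \<Rightarrow> bool" where
  "in_H2 p \<longleftrightarrow> lorentz p p = -1 \<and> snd (snd p) > 0"

definition nbody_rhs :: "nat \<Rightarrow> (nat \<Rightarrow> real) \<Rightarrow> (nat \<Rightarrow> point3) \<Rightarrow> point3 \<Rightarrow> nat \<Rightarrow> point3" where
  "nbody_rhs n m q vi i =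
     (\<Sum>j\<in>{..<n} - {i}.
        (m j / (((lorentz (q i) (q j))\<^sup>2 - 1) powr (3/2))) *\<^sub>R (q j + lorentz (q i) (q j) *\<^sub>R q i))
     + lorentz vi vi *\<^sub>R q i"

definition nbody_solution :: "nat \<Rightarrow> (nat \<Rightarrow> real) \<Rightarrow> (nat \<Rightarrow> real \<Rightarrow> point3) \<Rightarrow> bool" where
  "nbody_solution n m q \<longleftrightarrow>
     (\<exists>v a. \<forall>t. \<forall>i<n.
        (q i has_vector_derivative v i t) (at t) \<and>
        (v i has_vector_derivative a i t) (at t) \<and>
        in_H2 (q i t) \<and>
        lorentz (q i t) (v i t) = 0 \<and>
        (\<forall>j<n. j \<noteq> i \<longrightarrow> q i t \<noteq> q j t) \<and>
        a i t = nbody_rhs n m (\<lambda>j. q j t) (v i t) i)"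

end

theory Submission
  imports Defs
begin

(* Suppose the bodies move along the geodesic x = 0 as
   q_i(t) = P(omega t + alpha_i), where P(s) = (0, sinh s, cosh s).  Then the velocity is
   omega T(s) with T(s) = (0, cosh s, sinh s), and the acceleration is omega^2 P(s), which is
   Lorentz-orthogonal to the unit tangent T(s).  Now look at the leading body i, the one with
   the largest phase alpha_i.  Every other body lies behind it on the geodesic, so each
   gravitational term pulls body i backwards: its Lorentz product with T(alpha_i) equals
   m_j sinh(alpha_j - alpha_i) / |sinh(alpha_j - alpha_i)|^3 < 0, while the centripetal term
   (v.v) q_i is orthogonal to T.  Hence the tangential component of the right-hand side is
   strictly negative, whereas that of the actual acceleration is zero: contradiction.
   (The argument never uses omega <> 0: static configurations on the geodesic fail too.)
   The file first records linearity of the Lorentz form and the geometry of the hyperbola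
   P, then computes the motion's derivatives, proves the sign of the tangential force on a
   leading body, and finally derives the theorem. *)

lemma lorentz_add_left: "lorentz (a + b) w = lorentz a w + lorentz b w"
  unfolding lorentz_def by (simp add: algebra_simps)

lemma lorentz_scaleR_left: "lorentz (r *\<^sub>R a) w = r * lorentz a w"
  unfolding lorentz_def by (simp add: algebra_simps)

lemma lorentz_sum_left: "lorentz (sum f S) w = (\<Sum>j\<in>S. lorentz (f j) w)"
  unfolding lorentz_def fst_sum snd_sum
  by (simp add: sum_distrib_right sum_subtractf sum.distrib)

definition hyp_point :: "real \<Rightarrow> point3" where
  "hyp_point s = (0, sinh s, cosh s)"

definition hyp_tangent :: "real \<Rightarrow> point3" where
  "hyp_tangent s = (0, cosh s, sinh s)"

lemma lorentz_hyp_point_hyp_point: "lorentz (hyp_point a) (hyp_point b) = - cosh (a - b)"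
  unfolding hyp_point_def lorentz_def by (simp add: cosh_diff algebra_simps)

lemma lorentz_hyp_point_hyp_tangent: "lorentz (hyp_point a) (hyp_tangent b) = sinh (a - b)"
  unfolding hyp_point_def hyp_tangent_def lorentz_def by (simp add: sinh_diff algebra_simps)

lemma has_vector_derivative_hyp_point:
  "((\<lambda>t. hyp_point (\<omega> * t + c)) has_vector_derivative \<omega> *\<^sub>R hyp_tangent (\<omega> * t + c)) (at t)"
proof -
  have "((\<lambda>t. sinh (\<omega> * t + c)) has_real_derivative \<omega> * cosh (\<omega> * t + c)) (at t)"
       "((\<lambda>t. cosh (\<omega> * t + c)) has_real_derivative \<omega> * sinh (\<omega> * t + c)) (at t)"
    by (auto intro!: derivative_eq_intros)
  then show ?thesis
    unfolding hyp_point_def hyp_tangent_def has_real_derivative_iff_has_vector_derivative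
    by (auto intro!: has_vector_derivative_Pair)
qed

lemma has_vector_derivative_hyp_tangent:
  "((\<lambda>t. \<omega> *\<^sub>R hyp_tangent (\<omega> * t + c)) has_vector_derivative \<omega>\<^sup>2 *\<^sub>R hyp_point (\<omega> * t + c)) (at t)"
proof -
  have "((\<lambda>t. \<omega> * cosh (\<omega> * t + c)) has_real_derivative \<omega>\<^sup>2 * sinh (\<omega> * t + c)) (at t)"
       "((\<lambda>t. \<omega> * sinh (\<omega> * t + c)) has_real_derivative \<omega>\<^sup>2 * cosh (\<omega> * t + c)) (at t)"
    by (auto intro!: derivative_eq_intros simp: power2_eq_square)
  then show ?thesis
    unfolding hyp_point_def hyp_tangent_def has_real_derivative_iff_has_vector_derivative
    by (auto intro!: has_vector_derivative_Pair)
qed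

lemma pull_backwards:
  assumes "\<mu> > 0" and "a < b"
  shows "lorentz ((\<mu> / ((lorentz (hyp_point b) (hyp_point a))\<^sup>2 - 1) powr (3/2)) *\<^sub>R
                   (hyp_point a + lorentz (hyp_point b) (hyp_point a) *\<^sub>R hyp_point b))
                 (hyp_tangent b) < 0"
proof -
  have "(lorentz (hyp_point b) (hyp_point a))\<^sup>2 - 1 = (sinh (b - a))\<^sup>2"
    using cosh_square_eq[of "b - a"] by (simp add: lorentz_hyp_point_hyp_point)
  moreover have "sinh (b - a) \<noteq> 0" using assms(2) by simp
  ultimately have denom_pos: "((lorentz (hyp_point b) (hyp_point a))\<^sup>2 - 1) powr (3/2) > 0"
    by simp
  have "\<mu> * sinh (a - b) < 0"
    using assms by (simp add: mult_pos_neg)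
  with denom_pos show ?thesis
    by (simp add: lorentz_add_left lorentz_scaleR_left lorentz_hyp_point_hyp_tangent
        divide_neg_pos)
qed

lemma leading_body_tangential_force:
  assumes masses: "\<forall>j<n. m j > 0"
    and i: "i < n" and other: "\<exists>j<n. j \<noteq> i"
    and behind: "\<And>j. j < n \<Longrightarrow> j \<noteq> i \<Longrightarrow> \<beta> j < \<beta> i"
  shows "lorentz (nbody_rhs n m (\<lambda>j. hyp_point (\<beta> j)) vi i) (hyp_tangent (\<beta> i)) < 0"
proof -
  let ?term = "\<lambda>j. lorentz ((m j / ((lorentz (hyp_point (\<beta> i)) (hyp_point (\<beta> j)))\<^sup>2 - 1)
      powr (3/2)) *\<^sub>R (hyp_point (\<beta> j) + lorentz (hyp_point (\<beta> i)) (hyp_point (\<beta> j)) *\<^sub>R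
      hyp_point (\<beta> i))) (hyp_tangent (\<beta> i))"
  have "{..<n} - {i} \<noteq> {}" using other by blast
  then have "(\<Sum>j\<in>{..<n} - {i}. ?term j) < (\<Sum>j\<in>{..<n} - {i}. 0)"
    by (intro sum_strict_mono) (auto intro!: pull_backwards simp: masses behind)
  moreover have "lorentz (hyp_point (\<beta> i)) (hyp_tangent (\<beta> i)) = 0"
    by (simp add: lorentz_hyp_point_hyp_tangent)
  ultimately show ?thesis
    by (simp add: nbody_rhs_def lorentz_add_left lorentz_sum_left lorentz_scaleR_left)
qed

lemma leading_body_exists:
  fixes \<alpha> :: "nat \<Rightarrow> real"
  assumes "n > 0" and distinct: "\<forall>i<n. \<forall>j<n. i \<noteq> j \<longrightarrow> \<alpha> i \<noteq> \<alpha> j"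
  obtains i where "i < n" "\<And>j. j < n \<Longrightarrow> j \<noteq> i \<Longrightarrow> \<alpha> j < \<alpha> i"
proof -
  have fin: "finite (\<alpha> ` {..<n})" "\<alpha> ` {..<n} \<noteq> {}" using assms(1) by auto
  obtain i where i: "i < n" "\<alpha> i = Max (\<alpha> ` {..<n})"
    using Max_in[OF fin] by auto
  have "\<alpha> j < \<alpha> i" if "j < n" "j \<noteq> i" for j
  proof -
    have "\<alpha> j \<le> \<alpha> i" using i fin that by simp
    moreover have "\<alpha> j \<noteq> \<alpha> i" using distinct i that by blast
    ultimately show ?thesis by simp
  qed
  with i(1) show thesis by (rule that)
qed

theorem mainTheorem17:
  fixes n :: nat and m :: "nat \<Rightarrow> real" and \<omega> :: real and \<alpha> :: "nat \<Rightarrow> real"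
  assumes "n \<ge> 2"
    and "\<forall>i<n. m i > 0"
    and "\<omega> \<noteq> 0"
    and "\<forall>i<n. \<forall>j<n. i \<noteq> j \<longrightarrow> \<alpha> i \<noteq> \<alpha> j"
  shows "\<not> nbody_solution n m (\<lambda>i t. (0, sinh (\<omega> * t + \<alpha> i), cosh (\<omega> * t + \<alpha> i)))"
proof
  let ?q = "\<lambda>i t. hyp_point (\<omega> * t + \<alpha> i)"
  assume "nbody_solution n m (\<lambda>i t. (0, sinh (\<omega> * t + \<alpha> i), cosh (\<omega> * t + \<alpha> i)))"
  then obtain v a :: "nat \<Rightarrow> real \<Rightarrow> point3" where
    sol: "\<And>i t. i < n \<Longrightarrow> (?q i has_vector_derivative v i t) (at t) \<and>
      (v i has_vector_derivative a i t) (at t) \<and> a i t = nbody_rhs n m (\<lambda>j. ?q j t) (v i t) i"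
    unfolding nbody_solution_def hyp_point_def by blast
  obtain i where i: "i < n" and behind: "\<And>j. j < n \<Longrightarrow> j \<noteq> i \<Longrightarrow> \<alpha> j < \<alpha> i"
    using leading_body_exists[of n \<alpha>] assms(1,4) by auto
  have velocity: "v i t = \<omega> *\<^sub>R hyp_tangent (\<omega> * t + \<alpha> i)" for t
    by (rule vector_derivative_unique_at[OF conjunct1[OF sol[OF i]] has_vector_derivative_hyp_point])
  then have velocity_fun: "v i = (\<lambda>t. \<omega> *\<^sub>R hyp_tangent (\<omega> * t + \<alpha> i))" ..
  have "(v i has_vector_derivative a i 0) (at 0)"
    using sol[OF i, of 0] by blast
  then have "a i 0 = \<omega>\<^sup>2 *\<^sub>R hyp_point (\<omega> * 0 + \<alpha> i)"
    unfolding velocity_fun by (rule vector_derivative_unique_at[OF _ has_vector_derivative_hyp_tangent])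
  (* It has no tangential component, unlike the force acting on the leading body. *)
  then have "lorentz (nbody_rhs n m (\<lambda>j. hyp_point (\<alpha> j)) (v i 0) i) (hyp_tangent (\<alpha> i)) = 0"
    using sol[OF i, of 0] by (simp add: lorentz_scaleR_left lorentz_hyp_point_hyp_tangent)
  moreover have "\<exists>j<n. j \<noteq> i"
    using assms(1) i by (intro exI[of _ "if i = 0 then 1 else 0"]) auto
  then have "lorentz (nbody_rhs n m (\<lambda>j. hyp_point (\<alpha> j)) (v i 0) i) (hyp_tangent (\<alpha> i)) < 0"
    by (rule leading_body_tangential_force[OF assms(2) i]) (rule behind)
  ultimately show False by simp
qed

end
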